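(* Assume $\sigma$ is $1$-Lipschitz and $\sigma(0)=0$. Let $\bar w=(\bar w_1,\bar w_2)\in\mathsf W$ be a minimizer of $w\mapsto\|f_w-f_{\mathbf P}\|_{\mathbb L_2(\mu)}$ and $p=\mathcal N(\bar w_1,\tau_1^2\mathbf I_{D_0D_1})\otimes\mathcal N(\bar w_2,\tau_2^2\mathbf I_{D_1D_2})$ with $\tau_1,\tau_2>0$. Then, with $G_1(w)=\|f_w-f_{w_1,\bar w_2}\|^2_{\mathbb L_2(\mu)}$, $$\int_{\mathsf W}G_1(w)\,p(dw)\le M_2^2D_0D_1D_2\tau_1^2\tau_2^2+\bar M_2^2D_2\|\bar w_1\|_F^2\tau_2^2.$$
   Context: $\mathcal X\subset\mathbb R^{D_0}$ Borel, $\mu$ a $\sigma$-finite measure on $\mathcal X$, $M_2^2=D_0^{-1}\int\|x\|_2^2\mu(dx)<\infty$, $\bar M_2^2:=\|\int_{\mathcal X}xx^\top\mu(dx)\|_{\mathrm{sp}}$ (spectral norm), $\|f\|^2_{\mathbb L_2(\mu)}=\int\|f(x)\|_2^2\mu(dx)$, $f_{\mathbf P}\in\mathbb L_2(\mu)$ a given target. Parameters $w=(w_1,w_2)\in\mathsf W=\mathbb R^{D_0\times D_1}\times\mathbb R^{D_1\times D_2}$; $f_w=f_{w_1,w_2}$, $f_w(x)=w_2^\top\bar\sigma(w_1^\top x)$, $\bar\sigma$ coordinatewise; $\|\cdot\|_F$ Frobenius norm. *)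

theory Defs
  imports "HOL-Probability.Probability"
begin

definition act_vec :: "(real \<Rightarrow> real) \<Rightarrow> real^'n \<Rightarrow> real^'n" where
  "act_vec \<sigma> v = (\<chi> j. \<sigma> (v $ j))"

text \<open>Two-layer network f_w(x) = w2^T sigma(w1^T x), w1 : D0 x D1, w2 : D1 x D2.\<close>
definition net :: "(real \<Rightarrow> real) \<Rightarrow> real^'n1^'n0 \<Rightarrow> real^'n2^'n1 \<Rightarrow> real^'n0 \<Rightarrow> real^'n2" where
  "net \<sigma> w1 w2 x = transpose w2 *v act_vec \<sigma> (transpose w1 *v x)"

definition L2_dist_sq :: "'a measure \<Rightarrow> ('a \<Rightarrow> 'b::real_normed_vector) \<Rightarrow> ('a \<Rightarrow> 'b) \<Rightarrow> ennreal" where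
  "L2_dist_sq \<mu> f g = (\<integral>\<^sup>+ x. ennreal ((norm (f x - g x))\<^sup>2) \<partial>\<mu>)"

definition frob_norm :: "real^'m^'n \<Rightarrow> real" where
  "frob_norm A = sqrt (\<Sum>i\<in>UNIV. \<Sum>j\<in>UNIV. (A $ i $ j)\<^sup>2)"

definition M2_sq :: "(real^'n0) measure \<Rightarrow> real" where
  "M2_sq \<mu> = (\<integral> x. (norm x)\<^sup>2 \<partial>\<mu>) / real CARD('n0)"

definition second_moment :: "(real^'n0) measure \<Rightarrow> real^'n0^'n0" where
  "second_moment \<mu> = (\<chi> i j. \<integral> x. x $ i * x $ j \<partial>\<mu>)"

definition Mbar2_sq :: "(real^'n0) measure \<Rightarrow> real" where
  "Mbar2_sq \<mu> = onorm (\<lambda>v. second_moment \<mu> *v v)"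

definition gauss_mat :: "real^'m^'n \<Rightarrow> real \<Rightarrow> (real^'m^'n) measure" where
  "gauss_mat m \<tau> = density lborel
     (\<lambda>w. ennreal (\<Prod>i\<in>UNIV. \<Prod>j\<in>UNIV. normal_density (m $ i $ j) \<tau> (w $ i $ j)))"

end

theory Submission
  imports Defs
begin

text \<open>
  For an isotropic Gaussian \<open>w\<close> with mean \<open>m\<close> and variance \<open>\<tau>\<^sup>2\<close> on a Euclidean
  space and a linear map \<open>L\<close>, the coordinate covariances give
  \<open>E |L (w - c)|\<^sup>2 = |L (m - c)|\<^sup>2 + \<tau>\<^sup>2 \<Sum>\<^sub>b |L b|\<^sup>2\<close>.
  For fixed \<open>w1\<close> and \<open>x\<close>, the difference of the outputs at \<open>(w1, w2)\<close> and \<open>(w1, wb2)\<close>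
  is \<open>(w2 - wb2)\<^sup>T a\<close> with \<open>a = \<sigma>(w1\<^sup>T x)\<close>, and \<open>w2\<close> is centred at \<open>wb2\<close>; so averaging
  over the second layer gives \<open>\<tau>2\<^sup>2 D2 |a|\<^sup>2 \<le> \<tau>2\<^sup>2 D2 |w1\<^sup>T x|\<^sup>2\<close>, as \<open>|\<sigma> t| \<le> |t|\<close>,
  and then averaging over the first layer gives \<open>\<tau>2\<^sup>2 D2 (|wb1\<^sup>T x|\<^sup>2 + \<tau>1\<^sup>2 D1 |x|\<^sup>2)\<close>.
  Integrating over \<open>\<mu>\<close> (Tonelli), the second term yields \<open>D0 M2\<^sup>2\<close>, and the first is the
  sum over the columns \<open>u\<close> of \<open>wb1\<close> of \<open>u\<^sup>T S u \<le> Mbar2\<^sup>2 |u|\<^sup>2\<close>, where \<open>S\<close> is the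
  second moment matrix of \<open>\<mu>\<close>.
\<close>

lemma has_bochner_integral_prod_Basis:
  fixes f :: "'a::euclidean_space \<Rightarrow> real \<Rightarrow> real"
  assumes "\<And>b. b \<in> Basis \<Longrightarrow> integrable lborel (f b)"
  shows "has_bochner_integral (lborel :: 'a measure) (\<lambda>x. \<Prod>b\<in>Basis. f b (x \<bullet> b))
           (\<Prod>b\<in>Basis. integral\<^sup>L lborel (f b))"
proof -
  interpret product_sigma_finite "\<lambda>_::'a. lborel :: real measure" by standard
  have coords: "(\<lambda>y. \<Prod>b\<in>Basis. f b ((\<Sum>c\<in>Basis. y c *\<^sub>R c) \<bullet> b)) = (\<lambda>y. \<Prod>b\<in>Basis. f b (y b))"
    by (intro ext prod.cong refl) (simp add: inner_sum_left inner_Basis if_distrib cong: if_cong)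
  have f_measurable: "f b \<in> borel_measurable borel" if "b \<in> Basis" for b
    using borel_measurable_integrable[OF assms[OF that]] by simp
  have "(\<lambda>x::'a. \<Prod>b\<in>Basis. f b (x \<bullet> b)) \<in> borel_measurable borel"
    by (intro borel_measurable_prod measurable_compose[OF _ f_measurable]) auto
  \<comment> \<open>\<open>lborel_eq\<close>: \<open>lborel\<close> is the image of the product of one-dimensional Lebesgue
    measures under \<open>y \<mapsto> \<Sum>\<^sub>c y c *\<^sub>R c\<close>.\<close>
  then show ?thesis
    using product_integrable_prod[of Basis f] product_integral_prod[of Basis f] assms
    by (subst lborel_eq)
      (simp add: has_bochner_integral_iff integrable_distr_eq integral_distr coords)
qed

lemma normal_moment_shifted_1:
  assumes "0 < \<tau>"
  shows "has_bochner_integral lborel (\<lambda>t. normal_density \<mu> \<tau> t * (t - a)) (\<mu> - a)"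
proof -
  have "has_bochner_integral lborel
      (\<lambda>t. normal_density \<mu> \<tau> t * t - a * normal_density \<mu> \<tau> t) (\<mu> - a * 1)"
    using assms
    by (intro has_bochner_integral_diff normal_moment_nz_1 has_bochner_integral_mult_right)
      (simp_all add: has_bochner_integral_iff)
  then show ?thesis
    by (simp add: algebra_simps)
qed

lemma normal_moment_shifted_2:
  assumes "0 < \<tau>"
  shows "has_bochner_integral lborel (\<lambda>t. normal_density \<mu> \<tau> t * (t - a)\<^sup>2) ((\<mu> - a)\<^sup>2 + \<tau>\<^sup>2)"
proof -
  have variance: "has_bochner_integral lborel (\<lambda>t. normal_density \<mu> \<tau> t * (t - \<mu>)\<^sup>2) (\<tau>\<^sup>2)"
    using normal_moment_even[OF assms, of \<mu> 1] assms by (simp add: numeral_2_eq_2)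
  have "has_bochner_integral lborel
      (\<lambda>t. normal_density \<mu> \<tau> t * (t - \<mu>)\<^sup>2 + 2 * (\<mu> - a) * (normal_density \<mu> \<tau> t * (t - a))
         - (\<mu> - a)\<^sup>2 * normal_density \<mu> \<tau> t)
      (\<tau>\<^sup>2 + 2 * (\<mu> - a) * (\<mu> - a) - (\<mu> - a)\<^sup>2 * 1)"
    using assms
    by (intro has_bochner_integral_diff has_bochner_integral_add variance
        has_bochner_integral_mult_right normal_moment_shifted_1)
      (simp_all add: has_bochner_integral_iff)
  then show ?thesis
    by (simp add: power2_eq_square algebra_simps)
qed

definition iso_gaussian :: "'a::euclidean_space \<Rightarrow> real \<Rightarrow> 'a measure" where
  "iso_gaussian m \<tau> = density lborel (\<lambda>w. ennreal (\<Prod>b\<in>Basis. normal_density (m \<bullet> b) \<tau> (w \<bullet> b)))"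

lemma sets_iso_gaussian [measurable_cong, simp]: "sets (iso_gaussian m \<tau>) = sets borel"
  by (simp add: iso_gaussian_def)

lemma has_bochner_integral_iso_gaussian_prod:
  fixes m :: "'a::euclidean_space"
  assumes "\<And>b. b \<in> Basis \<Longrightarrow> integrable lborel (\<lambda>t. normal_density (m \<bullet> b) \<tau> t * f b t)"
    and [measurable]: "\<And>b. f b \<in> borel_measurable borel"
  shows "has_bochner_integral (iso_gaussian m \<tau>) (\<lambda>w. \<Prod>b\<in>Basis. f b (w \<bullet> b))
           (\<Prod>b\<in>Basis. \<integral>t. normal_density (m \<bullet> b) \<tau> t * f b t \<partial>lborel)"
proof -
  have "has_bochner_integral lborel
      (\<lambda>w. (\<Prod>b\<in>Basis. normal_density (m \<bullet> b) \<tau> (w \<bullet> b)) *\<^sub>R (\<Prod>b\<in>Basis. f b (w \<bullet> b)))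
      (\<Prod>b\<in>Basis. \<integral>t. normal_density (m \<bullet> b) \<tau> t * f b t \<partial>lborel)"
    using has_bochner_integral_prod_Basis[OF assms(1)] by (simp add: prod.distrib)
  then show ?thesis
    unfolding iso_gaussian_def
    by (subst has_bochner_integral_density) (auto intro!: AE_I2 prod_nonneg)
qed

lemma prob_space_iso_gaussian:
  assumes "0 < \<tau>"
  shows "prob_space (iso_gaussian m \<tau>)"
proof
  have "has_bochner_integral (iso_gaussian m \<tau>) (\<lambda>w. \<Prod>b\<in>Basis. 1 :: real) 1"
    using has_bochner_integral_iso_gaussian_prod[of m \<tau> "\<lambda>_ _. 1"] assms by simp
  then have "(\<integral>\<^sup>+w. 1 \<partial>iso_gaussian m \<tau>) = 1"
    using nn_integral_eq_integrable[of "\<lambda>_. 1" "iso_gaussian m \<tau>" 1]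
    by (simp add: has_bochner_integral_iff)
  then show "emeasure (iso_gaussian m \<tau>) (space (iso_gaussian m \<tau>)) = 1"
    by simp
qed

lemma has_bochner_integral_iso_gaussian_covariance:
  fixes m c :: "'a::euclidean_space"
  assumes "0 < \<tau>" "b1 \<in> Basis" "b2 \<in> Basis"
  shows "has_bochner_integral (iso_gaussian m \<tau>) (\<lambda>w. ((w - c) \<bullet> b1) * ((w - c) \<bullet> b2))
           (((m - c) \<bullet> b1) * ((m - c) \<bullet> b2) + (if b1 = b2 then \<tau>\<^sup>2 else 0))"
proof -
  \<comment> \<open>The integrand as a product over all coordinates, with factor 1 away from \<open>b1\<close> and \<open>b2\<close>.\<close>
  define f where "f b t = (if b = b1 then t - c \<bullet> b else 1) * (if b = b2 then t - c \<bullet> b else 1)"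
    for b t
  define I where "I b = (if b = b1 \<and> b = b2 then (m \<bullet> b - c \<bullet> b)\<^sup>2 + \<tau>\<^sup>2
      else if b = b1 \<or> b = b2 then m \<bullet> b - c \<bullet> b else 1)" for b
  have coordinate:
    "has_bochner_integral lborel (\<lambda>t. normal_density (m \<bullet> b) \<tau> t * f b t) (I b)" for b
    using normal_moment_shifted_2[OF assms(1), of "m \<bullet> b" "c \<bullet> b"]
      normal_moment_shifted_1[OF assms(1), of "m \<bullet> b" "c \<bullet> b"] assms(1)
    by (auto simp: f_def I_def power2_eq_square has_bochner_integral_iff)
  have [measurable]: "f b \<in> borel_measurable borel" for b
    unfolding f_def[abs_def] by measurable
  have "has_bochner_integral (iso_gaussian m \<tau>) (\<lambda>w. \<Prod>b\<in>Basis. f b (w \<bullet> b))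
      (\<Prod>b\<in>Basis. \<integral>t. normal_density (m \<bullet> b) \<tau> t * f b t \<partial>lborel)"
    using coordinate
    by (intro has_bochner_integral_iso_gaussian_prod) (auto simp: has_bochner_integral_iff)
  also have "(\<Prod>b\<in>Basis. \<integral>t. normal_density (m \<bullet> b) \<tau> t * f b t \<partial>lborel) = (\<Prod>b\<in>Basis. I b)"
    by (intro prod.cong refl has_bochner_integral_integral_eq coordinate)
  finally have
    "has_bochner_integral (iso_gaussian m \<tau>) (\<lambda>w. \<Prod>b\<in>Basis. f b (w \<bullet> b)) (\<Prod>b\<in>Basis. I b)" .
  moreover have "(\<Prod>b\<in>Basis. f b (w \<bullet> b)) = ((w - c) \<bullet> b1) * ((w - c) \<bullet> b2)" for w
    using assms by (simp add: f_def prod.distrib inner_diff_left)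
  moreover have "(\<Prod>b\<in>Basis. I b) = ((m - c) \<bullet> b1) * ((m - c) \<bullet> b2) + (if b1 = b2 then \<tau>\<^sup>2 else 0)"
  proof (cases "b1 = b2")
    case True
    then have "I b = (if b = b1 then (m \<bullet> b - c \<bullet> b)\<^sup>2 + \<tau>\<^sup>2 else 1)" for b
      by (simp add: I_def)
    with True assms show ?thesis
      by (simp add: inner_diff_left power2_eq_square)
  next
    case False
    then have "I b = (if b = b1 then m \<bullet> b - c \<bullet> b else 1) * (if b = b2 then m \<bullet> b - c \<bullet> b else 1)"
      for b
      by (auto simp: I_def)
    with False assms show ?thesis
      by (simp add: prod.distrib inner_diff_left)
  qed
  ultimately show ?thesis
    by simp
qed

lemma power2_norm_linear_eq_sum_Basis:
  fixes L :: "'a::euclidean_space \<Rightarrow> 'b::real_inner"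
  assumes "linear L"
  shows "(norm (L u))\<^sup>2 = (\<Sum>b\<in>Basis. \<Sum>b'\<in>Basis. (u \<bullet> b) * (u \<bullet> b') * (L b \<bullet> L b'))"
proof -
  have "L u = L (\<Sum>b\<in>Basis. (u \<bullet> b) *\<^sub>R b)"
    by (simp add: euclidean_representation)
  also have "\<dots> = (\<Sum>b\<in>Basis. (u \<bullet> b) *\<^sub>R L b)"
    by (simp add: linear_sum[OF assms] linear_scale[OF assms])
  finally have Lu: "L u = (\<Sum>b\<in>Basis. (u \<bullet> b) *\<^sub>R L b)" .
  show ?thesis
    unfolding power2_norm_eq_inner Lu inner_sum_left
    by (simp add: inner_sum_right mult.assoc mult.left_commute)
qed

lemma has_bochner_integral_iso_gaussian_norm_linear_sq:
  fixes m c :: "'a::euclidean_space" and L :: "'a \<Rightarrow> 'b::real_inner"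
  assumes "0 < \<tau>" "linear L"
  shows "has_bochner_integral (iso_gaussian m \<tau>) (\<lambda>w. (norm (L (w - c)))\<^sup>2)
           ((norm (L (m - c)))\<^sup>2 + \<tau>\<^sup>2 * (\<Sum>b\<in>Basis. (norm (L b))\<^sup>2))"
proof -
  define C where "C b b' = ((m - c) \<bullet> b) * ((m - c) \<bullet> b') + (if b = b' then \<tau>\<^sup>2 else 0)"
    for b b'
  have "has_bochner_integral (iso_gaussian m \<tau>)
      (\<lambda>w. \<Sum>b\<in>Basis. \<Sum>b'\<in>Basis. ((w - c) \<bullet> b) * ((w - c) \<bullet> b') * (L b \<bullet> L b'))
      (\<Sum>b\<in>Basis. \<Sum>b'\<in>Basis. C b b' * (L b \<bullet> L b'))"
    unfolding C_def using assms(1)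
    by (intro has_bochner_integral_sum has_bochner_integral_mult_left
        has_bochner_integral_iso_gaussian_covariance)
  moreover have "(\<Sum>b\<in>Basis. \<Sum>b'\<in>Basis. C b b' * (L b \<bullet> L b'))
      = (norm (L (m - c)))\<^sup>2 + \<tau>\<^sup>2 * (\<Sum>b\<in>Basis. (norm (L b))\<^sup>2)"
  proof -
    have "(if b = b' then \<tau>\<^sup>2 else 0) * y = (if b = b' then \<tau>\<^sup>2 * y else 0)"
      for b b' :: 'a and y :: real
      by simp
    then show ?thesis
      unfolding C_def power2_norm_linear_eq_sum_Basis[OF assms(2), of "m - c"]
      by (simp add: distrib_right sum.distrib sum_distrib_left power2_norm_eq_inner)
  qed
  ultimately show ?thesis
    by (simp add: power2_norm_linear_eq_sum_Basis[OF assms(2)])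
qed

lemma nn_integral_iso_gaussian_norm_linear_sq:
  fixes m c :: "'a::euclidean_space" and L :: "'a \<Rightarrow> 'b::real_inner"
  assumes "0 < \<tau>" "linear L"
  shows "(\<integral>\<^sup>+w. ennreal ((norm (L (w - c)))\<^sup>2) \<partial>iso_gaussian m \<tau>)
           = ennreal ((norm (L (m - c)))\<^sup>2 + \<tau>\<^sup>2 * (\<Sum>b\<in>Basis. (norm (L b))\<^sup>2))"
  using has_bochner_integral_iso_gaussian_norm_linear_sq[OF assms, of m c]
  by (simp add: has_bochner_integral_iff nn_integral_eq_integral)

lemma Basis_matrix: "(Basis :: (real^'m^'n) set) = (\<lambda>(i, j). axis i (axis j 1)) ` UNIV"
  by (auto simp: Basis_vec_def)

lemma inj_axis_axis: "inj (\<lambda>(i, j). axis i (axis j (1::real)) :: real^'m^'n)"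
  by (auto simp: inj_on_def axis_eq_axis)

lemma prod_Basis_matrix:
  "(\<Prod>b\<in>(Basis :: (real^'m^'n) set). g b) = (\<Prod>i\<in>UNIV. \<Prod>j\<in>UNIV. g (axis i (axis j 1)))"
  unfolding Basis_matrix prod.reindex[OF inj_axis_axis] prod.cartesian_product UNIV_Times_UNIV
  by (simp add: case_prod_beta)

lemma sum_Basis_matrix:
  "(\<Sum>b\<in>(Basis :: (real^'m^'n) set). g b) = (\<Sum>i\<in>UNIV. \<Sum>j\<in>UNIV. g (axis i (axis j 1)))"
  unfolding Basis_matrix sum.reindex[OF inj_axis_axis] sum.cartesian_product UNIV_Times_UNIV
  by (simp add: case_prod_beta)

lemma gauss_mat_eq_iso_gaussian: "gauss_mat m \<tau> = iso_gaussian m \<tau>"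
  unfolding gauss_mat_def iso_gaussian_def prod_Basis_matrix by (simp add: inner_axis)

lemma prob_space_gauss_mat: "0 < \<tau> \<Longrightarrow> prob_space (gauss_mat m \<tau>)"
  unfolding gauss_mat_eq_iso_gaussian by (rule prob_space_iso_gaussian)

lemma sets_gauss_mat [measurable_cong, simp]: "sets (gauss_mat m \<tau>) = sets borel"
  by (simp add: gauss_mat_eq_iso_gaussian)

lemma power2_norm_vec: "(norm (x :: real^'n))\<^sup>2 = (\<Sum>i\<in>UNIV. (x $ i)\<^sup>2)"
  unfolding power2_norm_eq_inner inner_vec_def by (simp add: power2_eq_square)

lemma linear_vector_matrix_mult: "linear (\<lambda>w :: real^'k^'j. v v* w)"
  by (rule linearI) (simp_all add: vector_matrix_mult_def vec_eq_iff sum.distrib sum_distrib_left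
      algebra_simps)

lemma vector_matrix_mult_axis_axis: "v v* axis i (axis j 1) = v $ i *\<^sub>R axis j (1::real)"
  by (simp add: vec_eq_iff vector_matrix_mult_def axis_def if_distrib[of "\<lambda>x. x $ _"]
      if_distrib[of "times (v $ _)"] cong: if_cong)

lemma sum_Basis_norm_vector_matrix_mult_sq:
  "(\<Sum>b\<in>(Basis :: (real^'k^'j) set). (norm (v v* b))\<^sup>2) = real CARD('k) * (norm v)\<^sup>2"
  unfolding sum_Basis_matrix vector_matrix_mult_axis_axis
  by (simp add: power2_norm_vec sum_distrib_left)

lemma nn_integral_gauss_mat_norm_vector_matrix_mult_sq:
  fixes m c :: "real^'k^'j"
  assumes "0 < \<tau>"
  shows "(\<integral>\<^sup>+w. ennreal ((norm (v v* w - v v* c))\<^sup>2) \<partial>gauss_mat m \<tau>)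
           = ennreal ((norm (v v* m - v v* c))\<^sup>2 + \<tau>\<^sup>2 * real CARD('k) * (norm v)\<^sup>2)"
  using nn_integral_iso_gaussian_norm_linear_sq[OF assms linear_vector_matrix_mult,
      where m = m and c = c]
  by (simp add: gauss_mat_eq_iso_gaussian sum_Basis_norm_vector_matrix_mult_sq
      vector_matrix_mult_diff_rdistrib mult.assoc)

lemma borel_measurable_vec_lambda [measurable (raw)]:
  assumes "\<And>i. (\<lambda>p. f p i) \<in> borel_measurable M"
  shows "(\<lambda>p. \<chi> i. f p i :: real^'n) \<in> borel_measurable M"
  using assms
  by (auto simp: borel_measurable_euclidean_space[where 'c = "real^'n"] Basis_vec_def inner_axis)

lemma borel_measurable_vec_nth [measurable]:
  "(\<lambda>x::'a::real_normed_vector^'n. x $ i) \<in> borel_measurable borel"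
  by (intro borel_measurable_continuous_onI linear_continuous_on bounded_linear_vec_nth)

lemma borel_measurable_vector_matrix_mult [measurable (raw)]:
  fixes f :: "'a \<Rightarrow> real^'n" and g :: "'a \<Rightarrow> real^'m^'n"
  assumes [measurable]: "f \<in> borel_measurable M" "g \<in> borel_measurable M"
  shows "(\<lambda>p. f p v* g p) \<in> borel_measurable M"
  unfolding vector_matrix_mult_def by measurable

lemma borel_measurable_act_vec [measurable (raw)]:
  assumes [measurable]: "\<sigma> \<in> borel_measurable borel" "f \<in> borel_measurable M"
  shows "(\<lambda>p. act_vec \<sigma> (f p)) \<in> borel_measurable M"
  unfolding act_vec_def by measurable

lemma borel_measurable_net [measurable (raw)]:
  assumes [measurable]: "\<sigma> \<in> borel_measurable borel"
    and [measurable]: "f \<in> borel_measurable M" "g \<in> borel_measurable M" "h \<in> borel_measurable M"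
  shows "(\<lambda>p. net \<sigma> (f p) (g p) (h p)) \<in> borel_measurable M"
  unfolding net_def transpose_matrix_vector by measurable

lemma norm_act_vec_le:
  assumes "\<And>t. \<bar>\<sigma> t\<bar> \<le> \<bar>t\<bar>"
  shows "norm (act_vec \<sigma> v) \<le> norm v"
  unfolding norm_vec_def act_vec_def by (intro L2_set_mono) (simp_all add: assms)

lemma nn_integral_gauss_mat_net_sq_dist_le:
  fixes m :: "real^'n1^'n0" and c :: "real^'n2^'n1" and x :: "real^'n0"
  assumes \<sigma>_le: "\<And>t. \<bar>\<sigma> t\<bar> \<le> \<bar>t\<bar>" and [measurable]: "\<sigma> \<in> borel_measurable borel"
    and "0 < \<tau>1" "0 < \<tau>2"
  shows "(\<integral>\<^sup>+w. ennreal ((norm (net \<sigma> (fst w) (snd w) x - net \<sigma> (fst w) c x))\<^sup>2)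
            \<partial>(gauss_mat m \<tau>1 \<Otimes>\<^sub>M gauss_mat c \<tau>2))
         \<le> ennreal (\<tau>2\<^sup>2 * real CARD('n2)
                    * ((norm (x v* m))\<^sup>2 + \<tau>1\<^sup>2 * real CARD('n1) * (norm x)\<^sup>2))"
proof -
  let ?G1 = "gauss_mat m \<tau>1" and ?G2 = "gauss_mat c \<tau>2" and ?v2 = "\<tau>2\<^sup>2 * real CARD('n2)"
  interpret G2: prob_space ?G2
    using prob_space_gauss_mat assms(4) .
  have "(\<lambda>w. ennreal ((norm (net \<sigma> (fst w) (snd w) x - net \<sigma> (fst w) c x))\<^sup>2))
      \<in> borel_measurable (?G1 \<Otimes>\<^sub>M ?G2)"
    by measurable
  then have "(\<integral>\<^sup>+w. ennreal ((norm (net \<sigma> (fst w) (snd w) x - net \<sigma> (fst w) c x))\<^sup>2) \<partial>(?G1 \<Otimes>\<^sub>M ?G2))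
      = (\<integral>\<^sup>+w1. \<integral>\<^sup>+w2.
            ennreal ((norm (act_vec \<sigma> (x v* w1) v* w2 - act_vec \<sigma> (x v* w1) v* c))\<^sup>2) \<partial>?G2 \<partial>?G1)"
    by (simp add: G2.nn_integral_fst[symmetric] net_def)
  also have "\<dots> = (\<integral>\<^sup>+w1. ennreal ?v2 * ennreal ((norm (act_vec \<sigma> (x v* w1)))\<^sup>2) \<partial>?G1)"
    using assms(4) by (simp add: nn_integral_gauss_mat_norm_vector_matrix_mult_sq ennreal_mult')
  also have "\<dots> \<le> (\<integral>\<^sup>+w1. ennreal ?v2 * ennreal ((norm (x v* w1))\<^sup>2) \<partial>?G1)"
    using norm_act_vec_le[OF \<sigma>_le]
    by (intro nn_integral_mono mult_left_mono ennreal_leI power_mono) auto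
  also have "\<dots> = ennreal ?v2 * (\<integral>\<^sup>+w1. ennreal ((norm (x v* w1))\<^sup>2) \<partial>?G1)"
    by (rule nn_integral_cmult) measurable
  also have "\<dots> = ennreal ?v2 * ennreal ((norm (x v* m))\<^sup>2 + \<tau>1\<^sup>2 * real CARD('n1) * (norm x)\<^sup>2)"
    using nn_integral_gauss_mat_norm_vector_matrix_mult_sq[OF assms(3),
        where c = "0 :: real^'n1^'n0"] by simp
  finally show ?thesis
    by (simp add: ennreal_mult')
qed

lemma integrable_power2_norm:
  fixes \<mu> :: "'a::euclidean_space measure"
  assumes "sets \<mu> = sets borel" "(\<integral>\<^sup>+x. ennreal ((norm x)\<^sup>2) \<partial>\<mu>) < \<infinity>"
  shows "integrable \<mu> (\<lambda>x. (norm x)\<^sup>2)"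
  using assms by (simp add: integrable_iff_bounded measurable_cong_sets[OF assms(1) refl])

lemma integrable_second_moment_entry:
  fixes \<mu> :: "(real^'n) measure"
  assumes "sets \<mu> = sets borel" "(\<integral>\<^sup>+x. ennreal ((norm x)\<^sup>2) \<partial>\<mu>) < \<infinity>"
  shows "integrable \<mu> (\<lambda>x. x $ i * x $ j)"
proof (rule Bochner_Integration.integrable_bound[OF integrable_power2_norm[OF assms]])
  show "(\<lambda>x. x $ i * x $ j) \<in> borel_measurable \<mu>"
    unfolding measurable_cong_sets[OF assms(1) refl] by measurable
  have "\<bar>x $ i\<bar> * \<bar>x $ j\<bar> \<le> norm x * norm x" for x :: "real^'n"
    by (intro mult_mono component_le_norm_cart) auto
  then show "AE x in \<mu>. norm (x $ i * x $ j) \<le> norm ((norm x)\<^sup>2)"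
    by (simp add: abs_mult power2_eq_square)
qed

lemma power2_inner_eq_sum:
  fixes u x :: "real^'n"
  shows "(u \<bullet> x)\<^sup>2 = (\<Sum>i\<in>UNIV. \<Sum>j\<in>UNIV. u $ i * u $ j * (x $ i * x $ j))"
  by (simp add: inner_vec_def power2_eq_square sum_product algebra_simps)

lemma integral_power2_inner_eq_second_moment:
  fixes \<mu> :: "(real^'n) measure"
  assumes "sets \<mu> = sets borel" "(\<integral>\<^sup>+x. ennreal ((norm x)\<^sup>2) \<partial>\<mu>) < \<infinity>"
  shows "integrable \<mu> (\<lambda>x. (u \<bullet> x)\<^sup>2)"
    and "(\<integral>x. (u \<bullet> x)\<^sup>2 \<partial>\<mu>) = u \<bullet> (second_moment \<mu> *v u)"
proof -
  note entry = integrable_second_moment_entry[OF assms]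
  show "integrable \<mu> (\<lambda>x. (u \<bullet> x)\<^sup>2)"
    unfolding power2_inner_eq_sum
    by (intro Bochner_Integration.integrable_sum integrable_mult_right entry)
  have "(\<integral>x. (u \<bullet> x)\<^sup>2 \<partial>\<mu>) = (\<Sum>i\<in>UNIV. \<Sum>j\<in>UNIV. u $ i * u $ j * (\<integral>x. x $ i * x $ j \<partial>\<mu>))"
    unfolding power2_inner_eq_sum
    by (simp add: Bochner_Integration.integral_sum Bochner_Integration.integrable_sum entry)
  then show "(\<integral>x. (u \<bullet> x)\<^sup>2 \<partial>\<mu>) = u \<bullet> (second_moment \<mu> *v u)"
    by (simp add: second_moment_def inner_vec_def matrix_vector_mult_def sum_distrib_left mult_ac)
qed

lemma inner_second_moment_le: "u \<bullet> (second_moment \<mu> *v u) \<le> Mbar2_sq \<mu> * (norm u)\<^sup>2"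
proof -
  have "u \<bullet> (second_moment \<mu> *v u) \<le> norm u * norm (second_moment \<mu> *v u)"
    by (rule norm_cauchy_schwarz)
  also have "\<dots> \<le> norm u * (Mbar2_sq \<mu> * norm u)"
    unfolding Mbar2_sq_def by (intro mult_left_mono onorm) auto
  finally show ?thesis
    by (simp add: power2_eq_square mult_ac)
qed

lemma power2_frob_norm: "(frob_norm W)\<^sup>2 = (\<Sum>k\<in>UNIV. (norm (column k W))\<^sup>2)"
proof -
  have "(frob_norm W)\<^sup>2 = (\<Sum>i\<in>UNIV. \<Sum>j\<in>UNIV. (W $ i $ j)\<^sup>2)"
    unfolding frob_norm_def by (simp add: sum_nonneg)
  also have "\<dots> = (\<Sum>j\<in>UNIV. \<Sum>i\<in>UNIV. (W $ i $ j)\<^sup>2)"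
    by (rule sum.swap)
  finally show ?thesis
    by (simp add: power2_norm_vec column_def)
qed

lemma integral_power2_norm_vector_matrix_mult_le:
  fixes \<mu> :: "(real^'n) measure" and W :: "real^'m^'n"
  assumes "sets \<mu> = sets borel" "(\<integral>\<^sup>+x. ennreal ((norm x)\<^sup>2) \<partial>\<mu>) < \<infinity>"
  shows "integrable \<mu> (\<lambda>x. (norm (x v* W))\<^sup>2)"
    and "(\<integral>x. (norm (x v* W))\<^sup>2 \<partial>\<mu>) \<le> Mbar2_sq \<mu> * (frob_norm W)\<^sup>2"
proof -
  have columns: "(norm (x v* W))\<^sup>2 = (\<Sum>k\<in>UNIV. (column k W \<bullet> x)\<^sup>2)" for x
    by (simp add: power2_norm_vec vector_matrix_mult_def column_def inner_vec_def mult.commute)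
  show "integrable \<mu> (\<lambda>x. (norm (x v* W))\<^sup>2)"
    unfolding columns using integral_power2_inner_eq_second_moment(1)[OF assms] by simp
  have "(\<integral>x. (norm (x v* W))\<^sup>2 \<partial>\<mu>) = (\<Sum>k\<in>UNIV. column k W \<bullet> (second_moment \<mu> *v column k W))"
    unfolding columns using integral_power2_inner_eq_second_moment[OF assms] by simp
  also have "\<dots> \<le> (\<Sum>k\<in>UNIV. Mbar2_sq \<mu> * (norm (column k W))\<^sup>2)"
    by (intro sum_mono inner_second_moment_le)
  finally show "(\<integral>x. (norm (x v* W))\<^sup>2 \<partial>\<mu>) \<le> Mbar2_sq \<mu> * (frob_norm W)\<^sup>2"
    by (simp add: power2_frob_norm sum_distrib_left)
qed

lemma nn_integral_pair_gauss_mat_L2_dist_sq_net_le: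
  fixes \<mu> :: "(real^'n0) measure" and m :: "real^'n1^'n0" and c :: "real^'n2^'n1"
  assumes "\<And>t. \<bar>\<sigma> t\<bar> \<le> \<bar>t\<bar>" "\<sigma> \<in> borel_measurable borel"
    and "sets \<mu> = sets borel" "sigma_finite_measure \<mu>" "0 < \<tau>1" "0 < \<tau>2"
  shows "(\<integral>\<^sup>+w. L2_dist_sq \<mu> (net \<sigma> (fst w) (snd w)) (net \<sigma> (fst w) c)
            \<partial>(gauss_mat m \<tau>1 \<Otimes>\<^sub>M gauss_mat c \<tau>2))
         \<le> (\<integral>\<^sup>+x. ennreal (\<tau>2\<^sup>2 * real CARD('n2)
                    * ((norm (x v* m))\<^sup>2 + \<tau>1\<^sup>2 * real CARD('n1) * (norm x)\<^sup>2)) \<partial>\<mu>)"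
proof -
  let ?P = "gauss_mat m \<tau>1 \<Otimes>\<^sub>M gauss_mat c \<tau>2"
  interpret P: prob_space ?P
    using assms(5,6) by (intro prob_space_pair prob_space_gauss_mat)
  interpret pair_sigma_finite ?P \<mu>
    by (intro pair_sigma_finite.intro P.sigma_finite_measure_axioms assms(4))
  note [measurable] = assms(2)
  have [measurable_cong]: "sets \<mu> = sets borel"
    by (rule assms(3))
  have "(\<integral>\<^sup>+w. L2_dist_sq \<mu> (net \<sigma> (fst w) (snd w)) (net \<sigma> (fst w) c) \<partial>?P)
      = (\<integral>\<^sup>+x. \<integral>\<^sup>+w. ennreal ((norm (net \<sigma> (fst w) (snd w) x - net \<sigma> (fst w) c x))\<^sup>2) \<partial>?P \<partial>\<mu>)"
    unfolding L2_dist_sq_def by (rule Fubini'[symmetric]) measurable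
  also have "\<dots> \<le> (\<integral>\<^sup>+x. ennreal (\<tau>2\<^sup>2 * real CARD('n2)
                    * ((norm (x v* m))\<^sup>2 + \<tau>1\<^sup>2 * real CARD('n1) * (norm x)\<^sup>2)) \<partial>\<mu>)"
    by (intro nn_integral_mono nn_integral_gauss_mat_net_sq_dist_le assms)
  finally show ?thesis .
qed

theorem lemma5:
  fixes \<mu> :: "(real^'n0) measure"
    and X :: "(real^'n0) set"
    and fP :: "real^'n0 \<Rightarrow> real^'n2"
    and \<sigma> :: "real \<Rightarrow> real"
    and wb1 :: "real^'n1^'n0" and wb2 :: "real^'n2^'n1"
    and \<tau>1 \<tau>2 :: real
  assumes "sets \<mu> = sets borel"
    and "X \<in> sets borel"
    and "emeasure \<mu> (UNIV - X) = 0"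
    and "sigma_finite_measure \<mu>"
    and "(\<integral>\<^sup>+ x. ennreal ((norm x)\<^sup>2) \<partial>\<mu>) < \<infinity>"
    and "fP \<in> borel_measurable \<mu>"
    and "(\<integral>\<^sup>+ x. ennreal ((norm (fP x))\<^sup>2) \<partial>\<mu>) < \<infinity>"
    and "1-lipschitz_on UNIV \<sigma>"
    and "\<sigma> 0 = 0"
    and "\<forall>(w1::real^'n1^'n0) (w2::real^'n2^'n1). L2_dist_sq \<mu> (net \<sigma> wb1 wb2) fP \<le> L2_dist_sq \<mu> (net \<sigma> w1 w2) fP"
    and "\<tau>1 > 0" and "\<tau>2 > 0"
  shows "(\<integral>\<^sup>+ w. L2_dist_sq \<mu> (net \<sigma> (fst w) (snd w)) (net \<sigma> (fst w) wb2)
             \<partial>(gauss_mat wb1 \<tau>1 \<Otimes>\<^sub>M gauss_mat wb2 \<tau>2))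
         \<le> ennreal (M2_sq \<mu> * real CARD('n0) * real CARD('n1) * real CARD('n2) * \<tau>1\<^sup>2 * \<tau>2\<^sup>2
                    + Mbar2_sq \<mu> * real CARD('n2) * (frob_norm wb1)\<^sup>2 * \<tau>2\<^sup>2)"
proof -
  have \<sigma>_le: "\<bar>\<sigma> t\<bar> \<le> \<bar>t\<bar>" for t
    using lipschitz_onD[OF assms(8), of t 0] assms(9) by (simp add: dist_real_def)
  have \<sigma>_measurable: "\<sigma> \<in> borel_measurable borel"
    using assms(8) by (intro borel_measurable_continuous_onI lipschitz_on_continuous_on)
  define D1 D2 where "D1 = real CARD('n1)" and "D2 = real CARD('n2)"
  let ?E = "\<lambda>f. \<integral>x. f x \<partial>\<mu>"
  note moments = integrable_power2_norm[OF assms(1,5)]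
    integral_power2_norm_vector_matrix_mult_le[OF assms(1,5), of wb1]
  have "(\<integral>\<^sup>+ w. L2_dist_sq \<mu> (net \<sigma> (fst w) (snd w)) (net \<sigma> (fst w) wb2)
             \<partial>(gauss_mat wb1 \<tau>1 \<Otimes>\<^sub>M gauss_mat wb2 \<tau>2))
      \<le> (\<integral>\<^sup>+x. ennreal (\<tau>2\<^sup>2 * D2 * ((norm (x v* wb1))\<^sup>2 + \<tau>1\<^sup>2 * D1 * (norm x)\<^sup>2)) \<partial>\<mu>)"
    unfolding D1_def D2_def
    by (rule nn_integral_pair_gauss_mat_L2_dist_sq_net_le[OF \<sigma>_le \<sigma>_measurable assms(1,4,11,12)])
  also have "\<dots> = ennreal (\<tau>2\<^sup>2 * D2
      * (?E (\<lambda>x. (norm (x v* wb1))\<^sup>2) + \<tau>1\<^sup>2 * D1 * ?E (\<lambda>x. (norm x)\<^sup>2)))"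
    using moments by (subst nn_integral_eq_integral) (auto simp: D1_def D2_def)
  also have "\<dots> \<le> ennreal (\<tau>2\<^sup>2 * D2
      * (Mbar2_sq \<mu> * (frob_norm wb1)\<^sup>2 + \<tau>1\<^sup>2 * D1 * ?E (\<lambda>x. (norm x)\<^sup>2)))"
    using moments by (intro ennreal_leI mult_left_mono add_right_mono) (auto simp: D2_def)
  finally show ?thesis
    by (simp add: M2_sq_def D1_def D2_def algebra_simps)
qed

end
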